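(* Let $k > 0$, let $\mathcal{J} \subseteq \{1,\dots,n\}$, and let ${\mathbf{x}}^* = k\sum_{j\in\mathcal{J}} {\mathbf{e}}_j$. Suppose there is a vector ${\mathbf{c}}$ with $$\frac{P {\mathbf{e}}_j}{\| P {\mathbf{e}}_j \|_2} \cdot {\mathbf{c}} = 1 \ \ \forall j \in \mathcal{J}, \qquad \frac{P {\mathbf{e}}_i}{\| P {\mathbf{e}}_i \|_2} \cdot {\mathbf{c}} < 1 \ \ \forall i \in \mathcal{J}^c.$$ Then ${\mathbf{x}}^*$ is the unique solution of $$\min_{0 \leq {\mathbf{x}} \leq k} \| W {\mathbf{x}} \|_1 \quad \text{subject to} \quad A {\mathbf{x}} = A {\mathbf{x}}^*.$$
   Context: $A \in \mathbb{R}^{m\times n}$ is a matrix, $A^\dagger$ its Moore–Penrose pseudoinverse, and $P = A^\dagger A$ the orthogonal projection onto $\mathcal{N}(A)^\perp$. ${\mathbf{e}}_1,\dots,{\mathbf{e}}_n$ are the standard unit vectors, assumed not to lie in $\mathcal{N}(A)$, so $w_i := \|P{\mathbf{e}}_i\|_2 > 0$; $W = \mathrm{diag}(w_1,\dots,w_n)$. Inequalities $0\le{\mathbf{x}}\le k$ are componentwise. *)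

theory Defs
  imports "HOL-Analysis.Analysis"
begin

text \<open>Moore--Penrose pseudoinverse, characterised by the four Penrose conditions
  (the matrix satisfying them exists and is unique).\<close>
definition penrose :: "real^'n^'m \<Rightarrow> real^'m^'n \<Rightarrow> bool" where
  "penrose A X \<longleftrightarrow> A ** X ** A = A \<and> X ** A ** X = X \<and>
     transpose (A ** X) = A ** X \<and> transpose (X ** A) = X ** A"

definition pinv :: "real^'n^'m \<Rightarrow> real^'m^'n" where
  "pinv A = (SOME X. penrose A X)"

definition projP :: "real^'n^'m \<Rightarrow> real^'n^'n" where
  "projP A = pinv A ** A"

definition wts :: "real^'n^'m \<Rightarrow> 'n \<Rightarrow> real" where
  "wts A i = norm (projP A *v axis i 1)"

definition Wmat :: "real^'n^'m \<Rightarrow> real^'n^'n" where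
  "Wmat A = (\<chi> i j. if i = j then wts A i else 0)"

definition norm1 :: "real^'n \<Rightarrow> real" where
  "norm1 x = (\<Sum>i\<in>UNIV. \<bar>x $ i\<bar>)"

end

theory Submission imports Defs begin

text \<open>The weighted 1-norm is linear on the nonnegative orthant, so the problem is a linear
  program over the box. The vector p = P c is a dual certificate: it is orthogonal to the
  null space of A, so p \<bullet> x is the same for every feasible x; it agrees with the weights
  on J, where x* sits at the upper bound k, and lies strictly below them elsewhere, where
  x* vanishes. Hence W x - p \<bullet> x is a nonnegative gap vanishing exactly at x*.
  Since the pseudoinverse is specified by the Penrose conditions, its existence has to be
  shown as well: it is G A^T, where G inverts A^T A + Q and Q is the orthogonal projection
  onto the null space of A.\<close>

lemma transpose_add: "transpose (A + B) = transpose A + transpose (B::real^'n^'m)"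
  by (simp add: transpose_def vec_eq_iff)

lemma matrix_add_rdistrib: "(B + C) ** A = B ** A + C ** (A::real^'p^'n)"
  for B C :: "real^'n^'m"
  by (vector matrix_matrix_mult_def sum.distrib[symmetric] field_simps)

lemma matrix_diff_rdistrib: "(B - C) ** A = B ** A - C ** (A::real^'p^'n)"
  for B C :: "real^'n^'m"
  by (vector matrix_matrix_mult_def sum_subtractf[symmetric] field_simps)

lemma matrix_diff_ldistrib: "A ** (B - C) = A ** B - A ** C"
  for B C :: "real^'p^'n" and A :: "real^'n^'m"
  by (vector matrix_matrix_mult_def sum_subtractf[symmetric] field_simps)

lemma inner_symmetric_matrix:
  fixes P :: "real^'n^'n"
  assumes "transpose P = P"
  shows "inner (P *v x) y = inner x (P *v y)"
  by (metis assms dot_lmul_matrix transpose_matrix_vector)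

lemma null_space_projection_exists:
  fixes A :: "real^'n^'m"
  obtains Q :: "real^'n^'n" where "transpose Q = Q" "Q ** Q = Q" "A ** Q = 0"
    "\<And>x. A *v x = 0 \<Longrightarrow> Q *v x = x"
proof -
  have "subspace {x. A *v x = 0}"
    by (simp add: subspace_def matrix_vector_right_distrib matrix_vector_mult_scaleR)
  then obtain B where B: "pairwise orthogonal B" "\<And>x. x \<in> B \<Longrightarrow> norm x = 1"
      "independent B" "span B = {x. A *v x = 0}"
    using orthonormal_basis_subspace by metis
  have "finite B" using B(3) independent_imp_finite by blast
  define Q :: "real^'n^'n" where "Q = (\<chi> i j. \<Sum>b\<in>B. b$i * b$j)"
  have Qv: "Q *v x = (\<Sum>b\<in>B. (x \<bullet> b) *\<^sub>R b)" for x
    by (simp add: vec_eq_iff Q_def matrix_vector_mult_def inner_vec_def sum_distrib_left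
       sum_distrib_right mult_ac) (simp add: sum.swap[of _ B])
  have range: "Q *v x \<in> span B" for x
    unfolding Qv by (simp add: span_clauses span_sum)
  have fixed: "Q *v x = x" if "x \<in> span B" for x
    unfolding Qv using orthonormal_basis_expand[OF B(1,2) that \<open>finite B\<close>] .
  show ?thesis
  proof
    show "transpose Q = Q" by (simp add: Q_def transpose_def vec_eq_iff mult.commute)
    show "Q ** Q = Q" unfolding matrix_eq
      using range fixed by (simp add: matrix_vector_mul_assoc[symmetric])
    show "A ** Q = 0" unfolding matrix_eq
      using range B(4) by (simp add: matrix_vector_mul_assoc[symmetric])
    show "Q *v x = x" if "A *v x = 0" for x using fixed B(4) that by auto
  qed
qed

lemma gram_plus_null_projection_injective:
  fixes A :: "real^'n^'m" and Q :: "real^'n^'n"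
  assumes sym: "transpose Q = Q" and idem: "Q ** Q = Q"
    and null: "\<And>x. A *v x = 0 \<Longrightarrow> Q *v x = x"
    and ker: "(transpose A ** A + Q) *v x = 0"
  shows "x = 0"
proof -
  have "inner x (Q *v x) = inner x (Q *v (Q *v x))"
    by (simp add: matrix_vector_mul_assoc idem)
  also have "\<dots> = inner (Q *v x) (Q *v x)"
    by (simp add: inner_symmetric_matrix[OF sym])
  finally have "inner x ((transpose A ** A + Q) *v x)
      = inner (A *v x) (A *v x) + inner (Q *v x) (Q *v x)"
    by (simp add: matrix_vector_mult_add_rdistrib inner_add_right
        matrix_vector_mul_assoc[symmetric] dot_lmul_matrix[symmetric] inner_commute)
  then have "inner (A *v x) (A *v x) + inner (Q *v x) (Q *v x) = 0"
    using ker by simp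
  then have "A *v x = 0" "Q *v x = 0"
    by (metis add_nonneg_eq_0_iff inner_eq_zero_iff inner_ge_zero)+
  then show ?thesis using null by metis
qed

lemma penrose_exists:
  fixes A :: "real^'n^'m"
  shows "\<exists>X. penrose A X"
proof -
  obtain Q :: "real^'n^'n" where Q: "transpose Q = Q" "Q ** Q = Q" "A ** Q = 0"
    "\<And>x. A *v x = 0 \<Longrightarrow> Q *v x = x"
    using null_space_projection_exists by blast
  define M where "M = transpose A ** A + Q"
  have Msym: "transpose M = M"
    by (simp add: M_def transpose_add matrix_transpose_mul Q(1))
  obtain G where G: "G ** M = mat 1"
    using gram_plus_null_projection_injective[OF Q(1,2,4)] matrix_left_invertible_ker
    unfolding M_def by blast
  then have MG: "M ** G = mat 1" using matrix_left_right_inverse by blast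
  have Gsym: "transpose G = G"
  proof -
    have GtM: "transpose G ** M = mat 1"
      using arg_cong[OF MG, of transpose] by (simp add: matrix_transpose_mul Msym)
    have "transpose G = transpose G ** (M ** G)" by (simp add: MG)
    also have "\<dots> = G" by (simp add: matrix_mul_assoc GtM)
    finally show ?thesis .
  qed
  have "M ** Q = Q"
    by (simp add: M_def matrix_add_rdistrib matrix_mul_assoc[symmetric] Q(2,3))
  then have GQ: "G ** Q = Q"
    by (metis G matrix_mul_assoc matrix_mul_lid)
  then have QG: "Q ** G = Q"
    by (metis Gsym Q(1) matrix_transpose_mul)
  have QAt: "Q ** transpose A = 0"
    using arg_cong[OF Q(3), of transpose]
    by (simp add: matrix_transpose_mul Q(1)) (simp add: transpose_def vec_eq_iff)
  define X where "X = G ** transpose A"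
  have XA: "X ** A = mat 1 - Q"
  proof -
    have "X ** A = G ** (M - Q)" by (simp add: X_def M_def matrix_mul_assoc)
    also have "\<dots> = mat 1 - Q" by (simp add: matrix_diff_ldistrib G GQ)
    finally show ?thesis .
  qed
  have "penrose A X"
    unfolding penrose_def
  proof (intro conjI)
    show "A ** X ** A = A"
      by (simp add: matrix_mul_assoc[symmetric] XA matrix_diff_ldistrib Q(3))
    show "X ** A ** X = X"
      by (simp add: XA matrix_diff_rdistrib) (simp add: X_def matrix_mul_assoc QG QAt)
    show "transpose (A ** X) = A ** X"
      by (simp add: X_def matrix_transpose_mul Gsym matrix_mul_assoc)
    show "transpose (X ** A) = X ** A"
      by (simp add: XA transpose_def vec_eq_iff mat_def) (metis Q(1) transpose_def vec_lambda_beta)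
  qed
  then show ?thesis by blast
qed

lemma penrose_pinv: "penrose A (pinv A)"
  unfolding pinv_def using penrose_exists someI_ex by metis

lemma projP_symmetric: "transpose (projP A) = projP A"
  using penrose_pinv[of A] by (simp add: penrose_def projP_def)

lemma matrix_mul_projP: "A ** projP A = A"
  using penrose_pinv[of A] by (simp add: penrose_def projP_def matrix_mul_assoc)

lemma inner_projP_axis: "inner (projP A *v axis i 1) c = (projP A *v c) $ i"
  by (simp add: inner_symmetric_matrix[OF projP_symmetric] inner_axis' inner_real_def)

lemma normalized_inner_projP_axis:
  assumes "wts A i > 0"
  shows "inner ((1 / wts A i) *\<^sub>R (projP A *v axis i 1)) c = 1 \<longleftrightarrow> (projP A *v c) $ i = wts A i"
    and "inner ((1 / wts A i) *\<^sub>R (projP A *v axis i 1)) c < 1 \<longleftrightarrow> (projP A *v c) $ i < wts A i"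
  using assms by (auto simp: inner_projP_axis field_simps)

lemma inner_projP_eq_if_same_image:
  assumes "A *v x = A *v y"
  shows "inner (projP A *v c) x = inner (projP A *v c) y"
proof -
  have "projP A *v x = projP A *v y"
    using assms by (simp add: projP_def matrix_vector_mul_assoc[symmetric])
  then show ?thesis by (simp add: inner_symmetric_matrix[OF projP_symmetric])
qed

lemma wts_pos:
  assumes "A *v axis i 1 \<noteq> 0"
  shows "wts A i > 0"
proof -
  have "A *v (projP A *v axis i 1) = A *v axis i 1"
    by (simp add: matrix_vector_mul_assoc matrix_mul_projP)
  then show ?thesis using assms by (force simp: wts_def)
qed

lemma norm1_Wmat_nonneg:
  assumes "\<forall>i. 0 \<le> x $ i"
  shows "norm1 (Wmat A *v x) = (\<Sum>i\<in>UNIV. wts A i * x $ i)"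
proof -
  have "(Wmat A *v x) $ i = wts A i * x $ i" for i
    by (simp add: Wmat_def matrix_vector_mult_def if_distrib if_distribR cong: if_cong)
  then show ?thesis
    using assms by (simp add: norm1_def abs_mult wts_def)
qed

lemma scaled_indicator_nth:
  "(k *\<^sub>R (\<Sum>j\<in>J. axis j (1::real))) $ i = (if i \<in> J then k else 0)"
  for J :: "'n::finite set"
  by (simp add: axis_def sum.delta' if_distrib cong: if_cong)

lemma certificate_minimal:
  fixes x xs p :: "real^'n" and w :: "'n \<Rightarrow> real"
  assumes "\<forall>i. p $ i \<le> w i" "\<forall>j\<in>J. p $ j = w j" "\<forall>i. 0 \<le> x $ i"
    and "\<forall>i. i \<notin> J \<longrightarrow> xs $ i = 0" and "inner p x = inner p xs"
  shows "(\<Sum>i\<in>UNIV. w i * xs $ i) \<le> (\<Sum>i\<in>UNIV. w i * x $ i)"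
proof -
  have support: "w i * xs $ i = p $ i * xs $ i" for i
    using assms(2,4) by (cases "i \<in> J") simp_all
  have "(\<Sum>i\<in>UNIV. w i * xs $ i) = inner p xs"
    by (simp only: support inner_vec_def inner_real_def)
  also have "\<dots> = (\<Sum>i\<in>UNIV. p $ i * x $ i)"
    using assms(5) by (simp add: inner_vec_def)
  also have "\<dots> \<le> (\<Sum>i\<in>UNIV. w i * x $ i)"
    using assms(1,3) by (intro sum_mono mult_right_mono) auto
  finally show ?thesis .
qed

lemma certificate_unique:
  fixes x p :: "real^'n" and w :: "'n \<Rightarrow> real" and k :: real and J :: "'n set"
  defines "xs \<equiv> k *\<^sub>R (\<Sum>j\<in>J. axis j 1)"
  assumes onJ: "\<forall>j\<in>J. p $ j = w j" and wpos: "\<forall>j\<in>J. 0 < w j"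
    and offJ: "\<forall>i. i \<notin> J \<longrightarrow> p $ i < w i"
    and box: "\<forall>i. 0 \<le> x $ i \<and> x $ i \<le> k"
    and same: "inner p x = inner p xs"
    and le: "(\<Sum>i\<in>UNIV. w i * x $ i) \<le> (\<Sum>i\<in>UNIV. w i * xs $ i)"
  shows "x = xs"
proof -
  have xs: "xs $ i = (if i \<in> J then k else 0)" for i
    unfolding xs_def by (rule scaled_indicator_nth)
  have same_sum: "(\<Sum>i\<in>UNIV. p $ i * x $ i) = (\<Sum>i\<in>UNIV. p $ i * xs $ i)"
    using same by (simp add: inner_vec_def)
  have gap_nonneg: "0 \<le> (w i - p $ i) * x $ i" for i
    using onJ offJ box by (cases "i \<in> J") auto
  have support: "w i * xs $ i = p $ i * xs $ i" for i
    using onJ xs by simp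
  have "(\<Sum>i\<in>UNIV. w i * xs $ i) = (\<Sum>i\<in>UNIV. p $ i * xs $ i)"
    by (simp only: support)
  then have "(\<Sum>i\<in>UNIV. (w i - p $ i) * x $ i) \<le> 0"
    using same_sum le by (simp add: left_diff_distrib sum_subtractf)
  then have "(\<Sum>i\<in>UNIV. (w i - p $ i) * x $ i) = 0"
    using gap_nonneg by (simp add: antisym sum_nonneg)
  then have "(w i - p $ i) * x $ i = 0" for i
    using gap_nonneg by (simp add: sum_nonneg_eq_0_iff)
  then have off: "x $ i = 0" if "i \<notin> J" for i
    using offJ that by (metis less_irrefl mult_eq_0_iff right_minus_eq)
  have slack_nonneg: "0 \<le> p $ i * (xs $ i - x $ i)" for i
    using onJ wpos box off xs by (simp add: less_imp_le)
  have "(\<Sum>i\<in>UNIV. p $ i * (xs $ i - x $ i)) = 0"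
    using same_sum by (simp add: right_diff_distrib sum_subtractf)
  then have slack_zero: "p $ i * (xs $ i - x $ i) = 0" for i
    using slack_nonneg by (simp add: sum_nonneg_eq_0_iff)
  have "x $ i = xs $ i" for i
  proof (cases "i \<in> J")
    case True
    then have "p $ i \<noteq> 0" using onJ wpos by force
    then show ?thesis using slack_zero[of i] by simp
  qed (simp add: off xs)
  then show "x = xs" by (simp add: vec_eq_iff)
qed

theorem corollary3:
  fixes A :: "real^'n^'m" and k :: real and J :: "'n set" and c :: "real^'n"
  assumes notnull: "\<forall>i. A *v axis i 1 \<noteq> 0"
    and kpos: "k > 0"
    and cJ: "\<forall>j\<in>J. inner ((1 / wts A j) *\<^sub>R (projP A *v axis j 1)) c = 1"
    and cJc: "\<forall>i\<in>UNIV - J. inner ((1 / wts A i) *\<^sub>R (projP A *v axis i 1)) c < 1"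
  defines "xstar \<equiv> k *\<^sub>R (\<Sum>j\<in>J. axis j (1::real))"
  shows "(\<forall>i. 0 \<le> xstar $ i \<and> xstar $ i \<le> k) \<and>
         (\<forall>x. (\<forall>i. 0 \<le> x $ i \<and> x $ i \<le> k) \<and> A *v x = A *v xstar
              \<longrightarrow> norm1 (Wmat A *v xstar) \<le> norm1 (Wmat A *v x)) \<and>
         (\<forall>x. (\<forall>i. 0 \<le> x $ i \<and> x $ i \<le> k) \<and> A *v x = A *v xstar
              \<and> norm1 (Wmat A *v x) \<le> norm1 (Wmat A *v xstar) \<longrightarrow> x = xstar)"
proof -
  let ?p = "projP A *v c"
  have wpos: "wts A i > 0" for i
    using wts_pos notnull by blast
  have onJ: "\<forall>j\<in>J. ?p $ j = wts A j"
    using cJ wpos normalized_inner_projP_axis(1) by blast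
  have offJ: "\<forall>i. i \<notin> J \<longrightarrow> ?p $ i < wts A i"
    using cJc wpos normalized_inner_projP_axis(2) by blast
  have below: "\<forall>i. ?p $ i \<le> wts A i"
  proof
    show "?p $ i \<le> wts A i" for i
      using onJ offJ by (cases "i \<in> J") (auto simp: less_imp_le)
  qed
  have xstar: "xstar $ i = (if i \<in> J then k else 0)" for i
    unfolding xstar_def by (rule scaled_indicator_nth)
  then have box: "\<forall>i. 0 \<le> xstar $ i \<and> xstar $ i \<le> k"
    and support: "\<forall>i. i \<notin> J \<longrightarrow> xstar $ i = 0"
    using kpos by simp_all
  have cost: "norm1 (Wmat A *v x) = (\<Sum>i\<in>UNIV. wts A i * x $ i)"
    if "\<forall>i. 0 \<le> x $ i \<and> x $ i \<le> k" for x
    using that by (intro norm1_Wmat_nonneg) auto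
  show ?thesis
  proof (intro conjI allI impI)
    fix x assume x: "(\<forall>i. 0 \<le> x $ i \<and> x $ i \<le> k) \<and> A *v x = A *v xstar"
    then have "inner ?p x = inner ?p xstar"
      by (intro inner_projP_eq_if_same_image) simp
    then have "(\<Sum>i\<in>UNIV. wts A i * xstar $ i) \<le> (\<Sum>i\<in>UNIV. wts A i * x $ i)"
      using x by (intro certificate_minimal[OF below onJ _ support]) auto
    then show "norm1 (Wmat A *v xstar) \<le> norm1 (Wmat A *v x)"
      using x box by (simp add: cost)
  next
    fix x assume x: "(\<forall>i. 0 \<le> x $ i \<and> x $ i \<le> k) \<and> A *v x = A *v xstar
      \<and> norm1 (Wmat A *v x) \<le> norm1 (Wmat A *v xstar)"
    then have "inner ?p x = inner ?p xstar"
      by (intro inner_projP_eq_if_same_image) simp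
    moreover have "(\<Sum>i\<in>UNIV. wts A i * x $ i) \<le> (\<Sum>i\<in>UNIV. wts A i * xstar $ i)"
      using x cost[of x] cost[OF box] by simp
    ultimately show "x = xstar"
      using x wpos unfolding xstar_def by (intro certificate_unique[OF onJ _ offJ]) auto
  qed (use box in auto)
qed

end
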